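(* For every formula $\phi$, $\mathbf{GLP}\vdash[1]\phi$ if and only if $\mathbf{GLP}\vdash\phi\leftrightarrow(Q_k(\phi)\to\phi)$ for some $k\geq 1$.
   Context: $\mathbf{GLP}$ is the propositional polymodal logic with modalities $[0],[1],\dots$ ($\langle k\rangle:=\neg[k]\neg$) axiomatized by classical tautologies; $[k](\phi\to\psi)\to([k]\phi\to[k]\psi)$; $[k]([k]\phi\to\phi)\to[k]\phi$; $\langle j\rangle\phi\to[k]\langle j\rangle\phi$ for $j<k$; $[j]\phi\to[k]\phi$ for $j\leq k$; rules modus ponens and necessitation. Define $Q_1(\phi):=\phi$ and $Q_{i+1}(\phi):=\phi\lor[0]Q_i(\phi)$. *)

theory Defs
  imports Main
begin

datatype fm =
    Var nat
  | Bot
  | Neg fm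
  | Conj fm fm
  | Disj fm fm
  | Imp fm fm
  | Box nat fm

definition Iff :: "fm \<Rightarrow> fm \<Rightarrow> fm" where
  "Iff a b = Conj (Imp a b) (Imp b a)"

definition Dia :: "nat \<Rightarrow> fm \<Rightarrow> fm" where
  "Dia k a = Neg (Box k (Neg a))"

fun peval :: "(fm \<Rightarrow> bool) \<Rightarrow> fm \<Rightarrow> bool" where
  "peval v (Var p) = v (Var p)"
| "peval v Bot = False"
| "peval v (Neg a) = (\<not> peval v a)"
| "peval v (Conj a b) = (peval v a \<and> peval v b)"
| "peval v (Disj a b) = (peval v a \<or> peval v b)"
| "peval v (Imp a b) = (peval v a \<longrightarrow> peval v b)"
| "peval v (Box k a) = v (Box k a)"

definition taut :: "fm \<Rightarrow> bool" where
  "taut a = (\<forall>v. peval v a)"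

inductive GLP :: "fm \<Rightarrow> bool" where
  ax_taut: "taut a \<Longrightarrow> GLP a"
| ax_K: "GLP (Imp (Box k (Imp a b)) (Imp (Box k a) (Box k b)))"
| ax_L: "GLP (Imp (Box k (Imp (Box k a) a)) (Box k a))"
| ax_neg: "j < k \<Longrightarrow> GLP (Imp (Dia j a) (Box k (Dia j a)))"
| ax_mono: "j \<le> k \<Longrightarrow> GLP (Imp (Box j a) (Box k a))"
| mp: "GLP (Imp a b) \<Longrightarrow> GLP a \<Longrightarrow> GLP b"
| nec: "GLP a \<Longrightarrow> GLP (Box k a)"

text \<open>Q_1(phi) = phi, Q_{i+1}(phi) = phi or [0] Q_i(phi). Q 0 is an irrelevant default.\<close>
fun Q :: "nat \<Rightarrow> fm \<Rightarrow> fm" where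
  "Q 0 a = a"
| "Q (Suc 0) a = a"
| "Q (Suc (Suc i)) a = Disj a (Box 0 (Q (Suc i) a))"

end

theory Submission
  imports Defs
begin

(*
  If GLP proves [1]phi, then phi is provable in GLP extended by the reflection schema
  [0]c --> c.  Otherwise a maximal consistent set M of that extension containing ~phi yields
  a propositional valuation of the boxed formulas that validates GLP: [0]a holds iff [0]a is
  in M, [1]a holds iff a is GLP-derivable from the formulas [0]b & b and <0>b lying in M, and
  [k]a holds for k >= 2.  These formulas x satisfy GLP |- x --> [1]x, which is what makes
  the valuation validate Loeb's axiom for [1]; reflection puts them into M, so [1]phi would
  put phi into M as well.

  So phi follows in GLP from finitely many reflection instances, and these are eliminated
  one at a time: from Q_k([0]c | phi) and Q_l(H --> phi) with H = [0]c & c one gets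
  Q_(k+l)(phi), because H is [0]-persistent and [0]c --> [0]H.  Finally
  phi <-> (Q_k(phi) --> phi) is propositionally equivalent to Q_k(phi).

  Conversely [1]Q_k(phi) --> [1]phi, since the disjunct [0]X of [1](phi | [0]X) is decided
  inside [1]: [0]X --> [1]X and ~[0]X --> [1]~[0]X.
*)

lemma GLP_tautI: "(\<And>v. peval v b) \<Longrightarrow> GLP b"
  by (auto intro!: ax_taut simp: taut_def)

lemma GLP_taut_mp: "GLP a \<Longrightarrow> (\<And>v. peval v a \<Longrightarrow> peval v b) \<Longrightarrow> GLP b"
  by (rule GLP.mp[of a b]) (auto intro!: GLP_tautI)

lemma GLP_taut_mp2:
  "GLP a \<Longrightarrow> GLP b \<Longrightarrow> (\<And>v. peval v a \<Longrightarrow> peval v b \<Longrightarrow> peval v c) \<Longrightarrow> GLP c"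
  by (rule GLP.mp[of b c], rule GLP_taut_mp[of a]) auto

lemma GLP_taut_mp3:
  "GLP a \<Longrightarrow> GLP b \<Longrightarrow> GLP c \<Longrightarrow>
    (\<And>v. peval v a \<Longrightarrow> peval v b \<Longrightarrow> peval v c \<Longrightarrow> peval v d) \<Longrightarrow> GLP d"
  by (rule GLP.mp[of c d], rule GLP_taut_mp2[of a b]) auto

lemma GLP_box_mono: "GLP (Imp a b) \<Longrightarrow> GLP (Imp (Box k a) (Box k b))"
  by (rule GLP.mp[OF ax_K nec])

lemma GLP_box_Conj: "GLP (Imp (Conj (Box k a) (Box k b)) (Box k (Conj a b)))"
proof -
  have "GLP (Imp (Box k a) (Box k (Imp b (Conj a b))))"
    by (rule GLP_box_mono, rule GLP_tautI) auto
  then show ?thesis by (rule GLP_taut_mp2[OF _ ax_K[of k b "Conj a b"]]) auto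
qed

lemma GLP_box_four: "GLP (Imp (Box k a) (Box k (Conj (Box k a) a)))"
proof -
  define c where "c = Conj (Box k a) a"
  have "GLP (Imp (Box k c) (Box k a))"
    by (rule GLP_box_mono, rule GLP_tautI) (auto simp: c_def)
  then have "GLP (Imp a (Imp (Box k c) c))"
    by (rule GLP_taut_mp) (auto simp: c_def)
  then have "GLP (Imp (Box k a) (Box k (Imp (Box k c) c)))"
    by (rule GLP_box_mono)
  from GLP_taut_mp2[OF this ax_L[of k c]] show ?thesis
    unfolding c_def by auto
qed

lemma GLP_not_box_box:
  assumes "j < k"
  shows "GLP (Imp (Neg (Box j a)) (Box k (Neg (Box j a))))"
proof -
  have "GLP (Imp (Box j a) (Box j (Neg (Neg a))))"
    by (rule GLP_box_mono, rule GLP_tautI) auto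
  then have "GLP (Imp (Box k (Dia j (Neg a))) (Box k (Neg (Box j a))))"
    by (intro GLP_box_mono, rule GLP_taut_mp) (auto simp: Dia_def)
  moreover have "GLP (Imp (Box j (Neg (Neg a))) (Box j a))"
    by (rule GLP_box_mono, rule GLP_tautI) auto
  ultimately show ?thesis
    by (rule GLP_taut_mp3[OF _ ax_neg[OF assms, of "Neg a"]]) (auto simp: Dia_def)
qed

lemma peval_Q: "peval v a \<Longrightarrow> peval v (Q k a)"
  by (induction k a rule: Q.induct) auto

lemma GLP_Q_Suc: "GLP (Imp (Q k a) (Q (Suc k) a))"
proof (induction k a rule: Q.induct)
  case (3 i a)
  have "GLP (Imp (Box 0 (Q (Suc i) a)) (Box 0 (Q (Suc (Suc i)) a)))"
    by (rule GLP_box_mono[OF 3])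
  then show ?case by (rule GLP_taut_mp) auto
qed (auto intro: GLP_tautI)

lemma GLP_Q_mono: "k \<le> l \<Longrightarrow> GLP (Imp (Q k a) (Q l a))"
proof (induction l rule: dec_induct)
  case base
  then show ?case by (auto intro: GLP_tautI)
next
  case (step l)
  from GLP_taut_mp2[OF step.IH GLP_Q_Suc[of l a]] show ?case by auto
qed

lemma GLP_Q_persistent:
  assumes "GLP (Imp H (Box 0 H))"
  shows "GLP (Imp (Conj H (Q k (Imp H a))) (Q k a))"
proof (induction k a rule: Q.induct)
  case (3 i a)
  have "GLP (Imp (Box 0 (Conj H (Q (Suc i) (Imp H a)))) (Box 0 (Q (Suc i) a)))"
    by (rule GLP_box_mono[OF 3])
  then show ?case
    by (rule GLP_taut_mp3[OF _ GLP_box_Conj[of 0 H "Q (Suc i) (Imp H a)"] assms]) auto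
qed (auto intro: GLP_tautI)

lemma GLP_Q_Disj:
  assumes G: "GLP (Imp G (Box 0 (Q (Suc l) a)))"
  shows "GLP (Imp (Q (Suc k) (Disj G a)) (Q (Suc k + Suc l) a))"
proof (induction k)
  case 0
  show ?case by (simp, rule GLP_taut_mp[OF G]) auto
next
  case (Suc k)
  have "GLP (Imp (Box 0 (Q (Suc k) (Disj G a))) (Box 0 (Q (Suc k + Suc l) a)))"
    by (rule GLP_box_mono[OF Suc])
  moreover have "GLP (Imp (Box 0 (Q (Suc l) a)) (Box 0 (Q (Suc k + Suc l) a)))"
    by (rule GLP_box_mono, rule GLP_Q_mono) simp
  ultimately show ?case
    by (simp, rule GLP_taut_mp3[OF _ _ G]) auto
qed

lemma GLP_box1_Q: "GLP (Imp (Box 1 (Q k a)) (Box 1 a))"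
proof (induction k a rule: Q.induct)
  case (3 i a)
  define X where "X = Q (Suc i) a"
  have "GLP (Imp (Box 1 (Disj a (Box 0 X))) (Box 1 (Imp (Neg (Box 0 X)) a)))"
    by (rule GLP_box_mono, rule GLP_tautI) auto
  then have "GLP (Imp (Box 1 (Disj a (Box 0 X))) (Imp (Box 1 (Neg (Box 0 X))) (Box 1 a)))"
    by (rule GLP_taut_mp2[OF _ ax_K]) auto
  moreover have "GLP (Imp (Box 0 X) (Box 1 a))"
    using GLP_taut_mp2[OF ax_mono[of 0 1 X] "3"[folded X_def]] by auto
  ultimately have "GLP (Imp (Box 1 (Disj a (Box 0 X))) (Box 1 a))"
    by (rule GLP_taut_mp3[OF _ GLP_not_box_box[OF zero_less_one, of X]]) auto
  then show ?case by (simp add: X_def)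
qed (auto intro: GLP_tautI)

section \<open>Reflection for [0] and its elimination\<close>

fun Conjs :: "fm list \<Rightarrow> fm" where
  "Conjs [] = Neg Bot"
| "Conjs (a # as) = Conj a (Conjs as)"

lemma peval_Conjs [simp]: "peval v (Conjs as) = (\<forall>a\<in>set as. peval v a)"
  by (induction as) auto

definition rfn0_conj :: "fm list \<Rightarrow> fm" where
  "rfn0_conj cs = Conjs (map (\<lambda>c. Imp (Box 0 c) c) cs)"

lemma peval_rfn0_conj: "peval v (rfn0_conj cs) = (\<forall>c\<in>set cs. v (Box 0 c) \<longrightarrow> peval v c)"
  by (auto simp: rfn0_conj_def)

inductive GLP_rfn0 :: "fm \<Rightarrow> bool" where
  GLP_rfn0I: "GLP a \<Longrightarrow> GLP_rfn0 a"
| rfn0_ax: "GLP_rfn0 (Imp (Box 0 c) c)"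
| rfn0_mp: "GLP_rfn0 (Imp a b) \<Longrightarrow> GLP_rfn0 a \<Longrightarrow> GLP_rfn0 b"

lemma GLP_rfn0_taut_mp: "GLP_rfn0 a \<Longrightarrow> (\<And>v. peval v a \<Longrightarrow> peval v b) \<Longrightarrow> GLP_rfn0 b"
  by (rule rfn0_mp[of a b], rule GLP_rfn0I, rule GLP_tautI) auto

lemma GLP_rfn0_taut_mp2:
  "GLP_rfn0 a \<Longrightarrow> GLP_rfn0 b \<Longrightarrow> (\<And>v. peval v a \<Longrightarrow> peval v b \<Longrightarrow> peval v c) \<Longrightarrow> GLP_rfn0 c"
  by (rule rfn0_mp[of b c], rule GLP_rfn0_taut_mp[of a]) auto

lemma GLP_rfn0_deduction: "GLP_rfn0 a \<Longrightarrow> \<exists>cs. GLP (Imp (rfn0_conj cs) a)"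
proof (induction rule: GLP_rfn0.induct)
  case (GLP_rfn0I a)
  then have "GLP (Imp (rfn0_conj []) a)" by (rule GLP_taut_mp) auto
  then show ?case by blast
next
  case (rfn0_ax c)
  have "GLP (Imp (rfn0_conj [c]) (Imp (Box 0 c) c))"
    by (rule GLP_tautI) (auto simp: rfn0_conj_def)
  then show ?case by blast
next
  case (rfn0_mp a b)
  obtain cs where cs: "GLP (Imp (rfn0_conj cs) (Imp a b))" using rfn0_mp.IH(1) by blast
  obtain ds where ds: "GLP (Imp (rfn0_conj ds) a)" using rfn0_mp.IH(2) by blast
  have "GLP (Imp (rfn0_conj (cs @ ds)) b)"
    by (rule GLP_taut_mp2[OF cs ds]) (auto simp: peval_rfn0_conj)
  then show ?case by blast
qed

lemma GLP_Q_eliminate_rfn0: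
  assumes "GLP (Q (Suc k) (Disj (Box 0 c) a))"
    and "GLP (Q (Suc l) (Imp (Conj (Box 0 c) c) a))"
  shows "GLP (Q (Suc k + Suc l) a)"
proof -
  define H where "H = Conj (Box 0 c) c"
  have box_H: "GLP (Imp (Box 0 c) (Box 0 H))"
    using GLP_box_four[of 0 c] by (simp add: H_def)
  then have "GLP (Imp H (Box 0 H))"
    by (rule GLP_taut_mp) (auto simp: H_def)
  then have "GLP (Imp H (Q (Suc l) a))"
    by (rule GLP_taut_mp2[OF GLP_Q_persistent assms(2)[folded H_def]]) auto
  then have "GLP (Imp (Box 0 c) (Box 0 (Q (Suc l) a)))"
    by (rule GLP_taut_mp2[OF box_H GLP_box_mono]) auto
  from GLP.mp[OF GLP_Q_Disj[OF this] assms(1)] show ?thesis .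
qed

lemma GLP_rfn0_conj_imp_Q:
  assumes "GLP (Imp (rfn0_conj cs) a)"
  shows "\<exists>k. GLP (Q (Suc k) a)"
  using assms
proof (induction cs arbitrary: a)
  case Nil
  then have "GLP (Q (Suc 0) a)" by (simp, rule GLP_taut_mp) (auto simp: rfn0_conj_def)
  then show ?case ..
next
  case (Cons c cs)
  then have a: "GLP (Imp (Conj (Imp (Box 0 c) c) (rfn0_conj cs)) a)"
    by (simp add: rfn0_conj_def)
  have "GLP (Imp (rfn0_conj cs) (Disj (Box 0 c) a))"
    by (rule GLP_taut_mp[OF a]) auto
  then obtain k where k: "GLP (Q (Suc k) (Disj (Box 0 c) a))"
    using Cons.IH by blast
  have "GLP (Imp (rfn0_conj cs) (Imp (Conj (Box 0 c) c) a))"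
    by (rule GLP_taut_mp[OF a]) auto
  then obtain l where l: "GLP (Q (Suc l) (Imp (Conj (Box 0 c) c) a))"
    using Cons.IH by blast
  from GLP_Q_eliminate_rfn0[OF k l] have "GLP (Q (Suc (k + Suc l)) a)"
    by simp
  then show ?case ..
qed

section \<open>Maximal consistent sets and the valuation they induce\<close>

definition consistent :: "fm set \<Rightarrow> bool" where
  "consistent S \<longleftrightarrow> (\<forall>as. set as \<subseteq> S \<longrightarrow> \<not> GLP_rfn0 (Imp (Conjs as) Bot))"

locale maximal_consistent =
  fixes M :: "fm set"
  assumes consistent: "consistent M"
    and maximal: "\<And>S. consistent S \<Longrightarrow> M \<subseteq> S \<Longrightarrow> S = M"

lemma Lindenbaum:
  assumes "\<not> GLP_rfn0 p"
  obtains M where "maximal_consistent M" and "Neg p \<in> M"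
proof -
  define \<A> where "\<A> = {S. Neg p \<in> S \<and> consistent S}"
  have "{Neg p} \<in> \<A>"
    unfolding \<A>_def consistent_def
  proof clarsimp
    fix as assume as: "set as \<subseteq> {Neg p}" and "GLP_rfn0 (Imp (Conjs as) Bot)"
    then have "GLP_rfn0 p"
      by (elim GLP_rfn0_taut_mp) (use as in fastforce)
    with assms show False ..
  qed
  moreover have "\<Union>\<C> \<in> \<A>" if "\<C> \<noteq> {}" and chain: "subset.chain \<A> \<C>" for \<C>
  proof -
    have "\<C> \<subseteq> \<A>" using chain by (simp add: subset.chain_def)
    have "consistent (\<Union>\<C>)" unfolding consistent_def
    proof (intro allI impI)
      fix as assume "set as \<subseteq> \<Union>\<C>"
      then obtain S where "S \<in> \<C>" "set as \<subseteq> S"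
        using finite_subset_Union_chain[of "set as" \<C> \<A>] \<open>\<C> \<noteq> {}\<close> chain by blast
      then show "\<not> GLP_rfn0 (Imp (Conjs as) Bot)"
        using \<open>\<C> \<subseteq> \<A>\<close> by (auto simp: \<A>_def consistent_def)
    qed
    with \<open>\<C> \<noteq> {}\<close> \<open>\<C> \<subseteq> \<A>\<close> show ?thesis by (auto simp: \<A>_def)
  qed
  ultimately obtain M where "M \<in> \<A>" "\<forall>S\<in>\<A>. M \<subseteq> S \<longrightarrow> S = M"
    using subset_Zorn_nonempty[of \<A>] by blast
  then show ?thesis
    by (intro that) (auto simp: \<A>_def maximal_consistent_def)
qed

context maximal_consistent
begin

lemma not_mem_refutable:
  assumes "a \<notin> M"
  obtains as where "set as \<subseteq> M" and "GLP_rfn0 (Imp (Conjs as) (Neg a))"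
proof -
  have "\<not> consistent (insert a M)"
    using maximal[of "insert a M"] assms by blast
  then obtain as where as: "set as \<subseteq> insert a M" "GLP_rfn0 (Imp (Conjs as) Bot)"
    by (auto simp: consistent_def)
  show ?thesis
  proof
    show "set (removeAll a as) \<subseteq> M" using as(1) by auto
    show "GLP_rfn0 (Imp (Conjs (removeAll a as)) (Neg a))"
      by (rule GLP_rfn0_taut_mp[OF as(2)]) auto
  qed
qed

lemma GLP_rfn0_consequence_mem:
  assumes "set as \<subseteq> M" and "GLP_rfn0 (Imp (Conjs as) b)"
  shows "b \<in> M"
proof (rule ccontr)
  assume "b \<notin> M"
  then obtain bs where bs: "set bs \<subseteq> M" "GLP_rfn0 (Imp (Conjs bs) (Neg b))"
    by (rule not_mem_refutable)
  have "GLP_rfn0 (Imp (Conjs (as @ bs)) Bot)"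
    by (rule GLP_rfn0_taut_mp2[OF assms(2) bs(2)]) auto
  with consistent assms(1) bs(1) show False by (auto simp: consistent_def)
qed

lemma GLP_rfn0_mem: "GLP_rfn0 a \<Longrightarrow> a \<in> M"
  by (rule GLP_rfn0_consequence_mem[of "[]"]) (auto elim: GLP_rfn0_taut_mp)

lemma GLP_mem: "GLP a \<Longrightarrow> a \<in> M"
  by (rule GLP_rfn0_mem[OF GLP_rfn0I])

lemma mem_mp: "Imp a b \<in> M \<Longrightarrow> a \<in> M \<Longrightarrow> b \<in> M"
  by (rule GLP_rfn0_consequence_mem[of "[Imp a b, a]"]) (auto intro!: GLP_rfn0I GLP_tautI)

lemma Neg_mem: "a \<notin> M \<Longrightarrow> Neg a \<in> M"
  by (metis GLP_rfn0_consequence_mem not_mem_refutable)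

lemma Neg_not_mem: "a \<in> M \<Longrightarrow> Neg a \<notin> M"
proof
  assume "a \<in> M" and "Neg a \<in> M"
  moreover have "GLP_rfn0 (Imp (Conjs [a, Neg a]) Bot)"
    by (intro GLP_rfn0I GLP_tautI) simp
  ultimately show False
    using consistent by (auto simp: consistent_def dest!: spec[of _ "[a, Neg a]"])
qed

definition persistent :: "fm set" where
  "persistent = {Conj (Box 0 b) b | b. Box 0 b \<in> M} \<union> {Dia 0 a | a. Dia 0 a \<in> M}"

definition box1_true :: "fm set" where
  "box1_true = {a. \<exists>as. set as \<subseteq> persistent \<and> GLP (Imp (Conjs as) a)}"

fun model_val :: "fm \<Rightarrow> bool" where
  "model_val (Box k a) = (if k = 0 then Box 0 a \<in> M else if k = 1 then a \<in> box1_true else True)"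
| "model_val _ = False"

lemma persistent_subset: "persistent \<subseteq> M"
proof
  fix x assume "x \<in> persistent"
  then consider b where "x = Conj (Box 0 b) b" "Box 0 b \<in> M" | "x \<in> M"
    by (auto simp: persistent_def)
  then show "x \<in> M"
  proof cases
    case 1
    have "GLP_rfn0 (Imp (Conjs [Box 0 b]) (Conj (Box 0 b) b))"
      by (rule GLP_rfn0_taut_mp[OF rfn0_ax[of b]]) auto
    with 1 show ?thesis using GLP_rfn0_consequence_mem[of "[Box 0 b]"] by auto
  qed
qed

lemma GLP_persistent_box1:
  assumes "x \<in> persistent"
  shows "GLP (Imp x (Box 1 x))"
proof -
  from assms consider b where "x = Conj (Box 0 b) b" | a where "x = Dia 0 a"
    by (auto simp: persistent_def)
  then show ?thesis
  proof cases
    case 1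
    then show ?thesis
      using GLP_taut_mp2[OF GLP_box_four[of 0 b] ax_mono[of 0 1 "Conj (Box 0 b) b"]] by auto
  next
    case 2
    then show ?thesis by (simp add: ax_neg)
  qed
qed

lemma GLP_Conjs_persistent_box1:
  "set as \<subseteq> persistent \<Longrightarrow> GLP (Imp (Conjs as) (Box 1 (Conjs as)))"
proof (induction as)
  case Nil
  have "GLP (Box 1 (Conjs []))" by (rule nec, rule GLP_tautI) simp
  then show ?case by (rule GLP_taut_mp) simp
next
  case (Cons x as)
  have "GLP (Imp x (Box 1 x))"
    using Cons.prems GLP_persistent_box1 by simp
  moreover have "GLP (Imp (Conjs as) (Box 1 (Conjs as)))"
    using Cons by simp
  ultimately show ?case by (rule GLP_taut_mp3[OF _ _ GLP_box_Conj[of 1 x "Conjs as"]]) auto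
qed

lemma box1_trueI: "set as \<subseteq> persistent \<Longrightarrow> GLP (Imp (Conjs as) a) \<Longrightarrow> a \<in> box1_true"
  by (auto simp: box1_true_def)

lemma box1_trueE:
  assumes "a \<in> box1_true"
  obtains as where "set as \<subseteq> persistent" and "GLP (Imp (Conjs as) a)"
  using assms by (auto simp: box1_true_def)

lemma GLP_box1_true: "GLP a \<Longrightarrow> a \<in> box1_true"
  by (rule box1_trueI[of "[]"]) (auto elim: GLP_taut_mp)

lemma box1_true_mp: "Imp a b \<in> box1_true \<Longrightarrow> a \<in> box1_true \<Longrightarrow> b \<in> box1_true"
proof (elim box1_trueE)
  fix as bs
  assume as: "set as \<subseteq> persistent" "GLP (Imp (Conjs as) (Imp a b))"
    and bs: "set bs \<subseteq> persistent" "GLP (Imp (Conjs bs) a)"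
  have "GLP (Imp (Conjs (as @ bs)) b)"
    by (rule GLP_taut_mp2[OF as(2) bs(2)]) auto
  with as(1) bs(1) show "b \<in> box1_true"
    by (intro box1_trueI[of "as @ bs"]) auto
qed

lemma box1_true_Loeb: "Imp (Box 1 a) a \<in> box1_true \<Longrightarrow> a \<in> box1_true"
proof (elim box1_trueE)
  fix as
  assume as: "set as \<subseteq> persistent" "GLP (Imp (Conjs as) (Imp (Box 1 a) a))"
  have "GLP (Imp (Box 1 (Conjs as)) (Box 1 (Imp (Box 1 a) a)))"
    by (rule GLP_box_mono[OF as(2)])
  then have "GLP (Imp (Conjs as) (Box 1 a))"
    by (rule GLP_taut_mp3[OF GLP_Conjs_persistent_box1[OF as(1)] _ ax_L[of 1 a]]) auto
  then have "GLP (Imp (Conjs as) a)"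
    by (rule GLP_taut_mp2[OF _ as(2)]) auto
  with as(1) show "a \<in> box1_true" by (rule box1_trueI)
qed

lemma box1_true_subset: "box1_true \<subseteq> M"
proof
  fix a assume "a \<in> box1_true"
  then obtain as where as: "set as \<subseteq> persistent" "GLP (Imp (Conjs as) a)"
    by (rule box1_trueE)
  show "a \<in> M"
    by (rule GLP_rfn0_consequence_mem[OF _ GLP_rfn0I[OF as(2)]])
      (use as(1) persistent_subset in auto)
qed

lemma GLP_model_val: "GLP a \<Longrightarrow> peval model_val a"
proof (induction rule: GLP.induct)
  case (ax_taut a)
  then show ?case by (simp add: taut_def)
next
  case (ax_K k a b)
  then show ?case
    using mem_mp[OF mem_mp[OF GLP_mem[OF GLP.ax_K[of 0 a b]]]] by (auto intro: box1_true_mp)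
next
  case (ax_L k a)
  then show ?case
    using mem_mp[OF GLP_mem[OF GLP.ax_L[of 0 a]]] by (auto intro: box1_true_Loeb)
next
  case (ax_neg j k a)
  have "Dia 0 a \<in> box1_true" if "Box 0 (Neg a) \<notin> M"
    using that Neg_mem[OF that]
    by (intro box1_trueI[of "[Dia 0 a]"] GLP_tautI) (auto simp: persistent_def Dia_def)
  with ax_neg show ?case by (auto simp: Dia_def)
next
  case (ax_mono j k a)
  have "a \<in> box1_true" if "Box 0 a \<in> M"
    using that
    by (intro box1_trueI[of "[Conj (Box 0 a) a]"] GLP_tautI) (auto simp: persistent_def)
  with ax_mono show ?case by auto
next
  case (mp a b)
  then show ?case by simp
next
  case (nec a k)
  then show ?case
    using GLP_mem[OF GLP.nec] by (auto intro: GLP_box1_true)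
qed

lemma GLP_box1_mem: "GLP (Box 1 a) \<Longrightarrow> a \<in> M"
  using GLP_model_val[of "Box 1 a"] box1_true_subset by auto

end

lemma GLP_box1_imp_GLP_rfn0: "GLP (Box 1 a) \<Longrightarrow> GLP_rfn0 a"
proof (rule ccontr)
  assume "GLP (Box 1 a)" "\<not> GLP_rfn0 a"
  then obtain M where "maximal_consistent M" "Neg a \<in> M"
    by (auto elim: Lindenbaum)
  then show False
    using maximal_consistent.GLP_box1_mem maximal_consistent.Neg_not_mem \<open>GLP (Box 1 a)\<close> by blast
qed

theorem mainTheorem16:
  shows "GLP (Box 1 \<phi>) \<longleftrightarrow> (\<exists>k\<ge>1. GLP (Iff \<phi> (Imp (Q k \<phi>) \<phi>)))"
proof
  assume "GLP (Box 1 \<phi>)"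
  then obtain cs where "GLP (Imp (rfn0_conj cs) \<phi>)"
    using GLP_box1_imp_GLP_rfn0 GLP_rfn0_deduction by blast
  then obtain k where "GLP (Q (Suc k) \<phi>)"
    using GLP_rfn0_conj_imp_Q by blast
  then have "GLP (Iff \<phi> (Imp (Q (Suc k) \<phi>) \<phi>))"
    by (rule GLP_taut_mp) (auto simp: Iff_def)
  then show "\<exists>k\<ge>1. GLP (Iff \<phi> (Imp (Q k \<phi>) \<phi>))"
    by (intro exI[of _ "Suc k"]) simp
next
  assume "\<exists>k\<ge>1. GLP (Iff \<phi> (Imp (Q k \<phi>) \<phi>))"
  then obtain k where "GLP (Iff \<phi> (Imp (Q k \<phi>) \<phi>))" by blast
  then have "GLP (Q k \<phi>)"
    by (rule GLP_taut_mp) (auto simp: Iff_def dest: peval_Q)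
  then show "GLP (Box 1 \<phi>)"
    by (rule GLP.mp[OF GLP_box1_Q nec])
qed

end
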